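(* Consider problem (PI): minimize $f(x)$ subject to $x\in X$, $g_i(x)\le 0$, $i=1,\dots,m$, where $\Gamma\subseteq\mathbb R^n$ is an open convex set and $X\subseteq\Gamma$ is convex. Let $\bar S$ be its solution set and $\bar x\in\bar S$. Assume $f:\Gamma\to\mathbb R$ is continuously differentiable and quasiconvex on $\Gamma$, $g_i$ for $i\in I(\bar x)$ are differentiable and quasiconvex on $\Gamma$, $g_i$ for $i\notin I(\bar x)$ are continuous at $\bar x$, $\nabla f(\bar x)\ne 0$, GMFCQ holds at $\bar x$, and $\lambda$ is a (fixed) KKT multiplier at $\bar x$. Define \[ \hat S_1'(\lambda):=\Big\{x\in X_1(\lambda)\ \Big|\ \nabla f(\bar x)^T(x-\bar x)=0,\ \nabla f(x)\ne0,\ \tfrac{\nabla f(x)}{\|\nabla f(x)\|}=\tfrac{\nabla f(\bar x)}{\|\nabla f(\bar x)\|}\Big\}, \] \[ \hat S_2'(\lambda):=\Big\{x\in X_1(\lambda)\ \Big|\ \nabla f(\bar x)^T(x-\bar x)\le0,\ \nabla f(x)\ne0,\ \tfrac{\nabla f(x)}{\|\nabla f(x)\|}=\tfrac{\nabla f(\bar x)}{\|\nabla f(\bar x)\|}\Big\}. \] Then $\bar S=\hat S_1'(\lambda)=\hat S_2'(\lambda)$.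
   Context: Quasiconvexity on $\Gamma$: $f(x+t(y-x))\le\max\{f(x),f(y)\}$ for all $x,y\in\Gamma$, $t\in[0,1]$. Feasible set $S:=\{x\in X\mid g_i(x)\le0,\ i=1,\dots,m\}$; $\bar S$ the set of global minimizers of $f$ on $S$. Active index set $I(x):=\{i\mid g_i(x)=0\}$. For a cone $C$, its negative polar is $C^*:=\{x\in\mathbb R^n\mid c^Tx\le 0\ \forall c\in C\}$; $T_X(x)$ is the tangent cone of $X$ at $x$ and $N_X(x):=(T_X(x))^*$ is the normal cone. GMFCQ holds at $\bar x$ iff there is $y\in (N_X(\bar x))^*$ with $\nabla g_i(\bar x)^Ty<0$ for all $i\in I(\bar x)$. A KKT multiplier at $\bar x$ is $\lambda\in\mathbb R^m$ with $\lambda_i\ge0$ for all $i$, $\lambda_ig_i(\bar x)=0$ for all $i$, and $\big[\nabla f(\bar x)+\sum_{i\in I(\bar x)}\lambda_i\nabla g_i(\bar x)\big]^T(x-\bar x)\ge0$ for all $x\in X$. Define $\tilde I(\bar x,\lambda):=\{i\mid g_i(\bar x)=0,\ \lambda_i>0\}$ and $X_1(\lambda):=\{x\in X\mid g_i(x)=0\ \forall i\in\tilde I(\bar x,\lambda),\ g_i(x)\le0\ \forall i\notin\tilde I(\bar x,\lambda)\}$. *)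

theory Defs
  imports "HOL-Analysis.Analysis"
begin

definition quasiconvex_on :: "'a::real_vector set \<Rightarrow> ('a \<Rightarrow> real) \<Rightarrow> bool" where
  "quasiconvex_on \<Gamma> f \<longleftrightarrow>
     (\<forall>x\<in>\<Gamma>. \<forall>y\<in>\<Gamma>. \<forall>t::real. 0 \<le> t \<and> t \<le> 1 \<longrightarrow> f (x + t *\<^sub>R (y - x)) \<le> max (f x) (f y))"

definition feasible :: "'a set \<Rightarrow> (nat \<Rightarrow> 'a \<Rightarrow> real) \<Rightarrow> nat \<Rightarrow> 'a set" where
  "feasible X g m = {x \<in> X. \<forall>i\<in>{1..m}. g i x \<le> 0}"

definition solset :: "('a \<Rightarrow> real) \<Rightarrow> 'a set \<Rightarrow> 'a set" where
  "solset f S = {x \<in> S. \<forall>y\<in>S. f x \<le> f y}"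

definition active :: "(nat \<Rightarrow> 'a \<Rightarrow> real) \<Rightarrow> nat \<Rightarrow> 'a \<Rightarrow> nat set" where
  "active g m x = {i \<in> {1..m}. g i x = 0}"

definition polar :: "'a::real_inner set \<Rightarrow> 'a set" where
  "polar C = {x. \<forall>c\<in>C. c \<bullet> x \<le> 0}"

definition tangent_cone :: "'a::real_normed_vector set \<Rightarrow> 'a \<Rightarrow> 'a set" where
  "tangent_cone X x = {d. \<exists>xs t. (\<forall>k. xs k \<in> X) \<and> (\<forall>k. t k > (0::real)) \<and>
       xs \<longlonglongrightarrow> x \<and> t \<longlonglongrightarrow> 0 \<and> (\<lambda>k. (1 / t k) *\<^sub>R (xs k - x)) \<longlonglongrightarrow> d}"

definition normal_cone :: "'a::real_inner set \<Rightarrow> 'a \<Rightarrow> 'a set" where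
  "normal_cone X x = polar (tangent_cone X x)"

text \<open>GMFCQ at xb; dg i is the gradient map of g i.\<close>
definition GMFCQ :: "'a::real_inner set \<Rightarrow> (nat \<Rightarrow> 'a \<Rightarrow> real) \<Rightarrow> (nat \<Rightarrow> 'a \<Rightarrow> 'a) \<Rightarrow> nat \<Rightarrow> 'a \<Rightarrow> bool" where
  "GMFCQ X g dg m xb \<longleftrightarrow> (\<exists>y\<in>polar (normal_cone X xb). \<forall>i\<in>active g m xb. dg i xb \<bullet> y < 0)"

definition KKT_mult :: "'a::real_inner set \<Rightarrow> ('a \<Rightarrow> 'a) \<Rightarrow> (nat \<Rightarrow> 'a \<Rightarrow> real) \<Rightarrow> (nat \<Rightarrow> 'a \<Rightarrow> 'a)
     \<Rightarrow> nat \<Rightarrow> 'a \<Rightarrow> (nat \<Rightarrow> real) \<Rightarrow> bool" where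
  "KKT_mult X df g dg m xb lam \<longleftrightarrow>
     (\<forall>i\<in>{1..m}. lam i \<ge> 0) \<and> (\<forall>i\<in>{1..m}. lam i * g i xb = 0) \<and>
     (\<forall>x\<in>X. (df xb + (\<Sum>i\<in>active g m xb. lam i *\<^sub>R dg i xb)) \<bullet> (x - xb) \<ge> 0)"

definition Itilde :: "(nat \<Rightarrow> 'a \<Rightarrow> real) \<Rightarrow> nat \<Rightarrow> 'a \<Rightarrow> (nat \<Rightarrow> real) \<Rightarrow> nat set" where
  "Itilde g m xb lam = {i \<in> {1..m}. g i xb = 0 \<and> lam i > 0}"

definition X1 :: "'a set \<Rightarrow> (nat \<Rightarrow> 'a \<Rightarrow> real) \<Rightarrow> nat \<Rightarrow> 'a \<Rightarrow> (nat \<Rightarrow> real) \<Rightarrow> 'a set" where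
  "X1 X g m xb lam = {x \<in> X. (\<forall>i\<in>Itilde g m xb lam. g i x = 0) \<and>
                              (\<forall>i\<in>{1..m} - Itilde g m xb lam. g i x \<le> 0)}"

definition S1' :: "'a::real_inner set \<Rightarrow> ('a \<Rightarrow> 'a) \<Rightarrow> (nat \<Rightarrow> 'a \<Rightarrow> real) \<Rightarrow> nat \<Rightarrow> 'a
     \<Rightarrow> (nat \<Rightarrow> real) \<Rightarrow> 'a set" where
  "S1' X df g m xb lam = {x \<in> X1 X g m xb lam. inner (df xb) (x - xb) = 0 \<and> df x \<noteq> 0 \<and>
       (1 / norm (df x)) *\<^sub>R df x = (1 / norm (df xb)) *\<^sub>R df xb}"

definition S2' :: "'a::real_inner set \<Rightarrow> ('a \<Rightarrow> 'a) \<Rightarrow> (nat \<Rightarrow> 'a \<Rightarrow> real) \<Rightarrow> nat \<Rightarrow> 'a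
     \<Rightarrow> (nat \<Rightarrow> real) \<Rightarrow> 'a set" where
  "S2' X df g m xb lam = {x \<in> X1 X g m xb lam. inner (df xb) (x - xb) \<le> 0 \<and> df x \<noteq> 0 \<and>
       (1 / norm (df x)) *\<^sub>R df x = (1 / norm (df xb)) *\<^sub>R df xb}"

end

theory Submission
  imports Defs
begin

text \<open>For a differentiable quasiconvex f, \<open>f z \<le> f u\<close> forces \<open>\<nabla>f(u)\<cdot>(z - u) \<le> 0\<close>, strictly
  if \<open>f z < f u\<close> and \<open>\<nabla>f(u) \<noteq> 0\<close>. So the closed half-space \<open>\<nabla>f(xb)\<cdot>(z - xb) \<ge> 0\<close> lies in the
  upper level set of \<open>f xb\<close>, and a point x on its boundary hyperplane with \<open>f x = f xb\<close> minimises
  f over the half-space; hence \<open>\<nabla>f(x)\<close> is a nonnegative multiple of \<open>\<nabla>f(xb)\<close>. It is not zero: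
  by continuity of \<open>\<nabla>f\<close> the segment from xb to x contains a point b with \<open>f b = f xb\<close> and
  \<open>\<nabla>f(b)\<cdot>\<nabla>f(xb) > 0\<close>, and moving x slightly along \<open>\<nabla>f(xb)\<close> would raise f at the moved copy of b
  above both endpoints, contradicting quasiconvexity.

  A minimiser x has \<open>\<nabla>f(xb)\<cdot>(x - xb) \<le> 0\<close> and \<open>\<nabla>g\<^sub>i(xb)\<cdot>(x - xb) \<le> 0\<close> for active i, so the KKT
  inequality makes all of these vanish, and the strict form for \<open>g\<^sub>i\<close> pins the constraints with
  positive multiplier to zero. Conversely, if \<open>\<nabla>f(x)\<close> is a positive multiple of \<open>\<nabla>f(xb)\<close> and
  \<open>\<nabla>f(xb)\<cdot>(x - xb) \<le> 0\<close>, the half-space argument at x gives \<open>f x \<le> f xb\<close>.\<close>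

lemma DERIV_pos_imp_eventually_gt_right:
  fixes \<phi> :: "real \<Rightarrow> real"
  assumes "(\<phi> has_real_derivative l) (at x)" and "0 < l"
  shows "\<forall>\<^sub>F t in at_right x. \<phi> x < \<phi> t"
proof -
  obtain d where "d > 0" and d: "\<forall>h>0. h < d \<longrightarrow> \<phi> x < \<phi> (x + h)"
    using DERIV_pos_inc_right[OF assms] by blast
  then have "\<forall>\<^sub>F t in at_right x. t \<in> {x<..<x + d}"
    using eventually_at_right_real[of x "x + d"] by simp
  then show ?thesis
    by eventually_elim (use d in \<open>force dest: spec[of _ "_ - x"]\<close>)
qed

lemma DERIV_nonpos_if_eventually_le_right:
  fixes \<phi> :: "real \<Rightarrow> real"
  assumes "(\<phi> has_real_derivative l) (at x)" and "\<forall>\<^sub>F t in at_right x. \<phi> t \<le> \<phi> x"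
  shows "l \<le> 0"
proof (rule ccontr)
  assume "\<not> l \<le> 0"
  with assms(1) have "\<forall>\<^sub>F t in at_right x. \<phi> x < \<phi> t"
    by (simp add: DERIV_pos_imp_eventually_gt_right)
  with assms(2) have "\<forall>\<^sub>F t in at_right x. False"
    by eventually_elim simp
  then show False
    by simp
qed

lemma has_derivative_along_line:
  fixes u v D :: "'a::real_inner"
  assumes "(f has_derivative (\<lambda>h. D \<bullet> h)) (at u)"
  shows "((\<lambda>t. f (u + t *\<^sub>R v)) has_real_derivative (D \<bullet> v)) (at 0)"
proof -
  have "((\<lambda>t. u + t *\<^sub>R v) has_derivative (\<lambda>t. t *\<^sub>R v)) (at 0)"
    by (auto intro!: derivative_eq_intros)
  from diff_chain_at[OF this] assms
  have "((\<lambda>t. f (u + t *\<^sub>R v)) has_derivative (\<lambda>t. D \<bullet> (t *\<^sub>R v))) (at 0)"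
    by (simp add: o_def del: inner_scaleR_right)
  then show ?thesis
    by (simp add: has_field_derivative_def mult.commute[of _ "D \<bullet> v"])
qed

lemma eventually_ray_in_open:
  fixes u v :: "'a::real_normed_vector"
  assumes "open G" and "u \<in> G"
  shows "\<forall>\<^sub>F t in at_right 0. u + t *\<^sub>R v \<in> G"
proof -
  have "((\<lambda>t. u + t *\<^sub>R v) \<longlongrightarrow> u) (at_right 0)"
    by (auto intro!: tendsto_eq_intros)
  then show ?thesis
    using topological_tendstoD assms by blast
qed

lemma continuous_on_tendsto_along_ray:
  fixes u v :: "'a::real_normed_vector"
  assumes "open G" and "u \<in> G" and "continuous_on G f"
  shows "((\<lambda>t. f (u + t *\<^sub>R v)) \<longlongrightarrow> f u) (at_right 0)"
proof -
  have "isCont f u"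
    using assms continuous_on_eq_continuous_at by blast
  moreover have "((\<lambda>t. u + t *\<^sub>R v) \<longlongrightarrow> u) (at_right 0)"
    by (auto intro!: tendsto_eq_intros)
  ultimately show ?thesis
    by (rule isCont_tendsto_compose)
qed

lemma continuous_on_if_has_derivative_at:
  assumes "\<forall>x\<in>G. (f has_derivative f' x) (at x)"
  shows "continuous_on G f"
  using assms by (intro has_derivative_continuous_on) (auto intro: has_derivative_at_withinI)

lemma nonneg_multiple_if_inner_nonneg_on_halfspace:
  fixes D d :: "'a::real_inner"
  assumes "d \<noteq> 0" and nonneg: "\<And>v. 0 < d \<bullet> v \<Longrightarrow> 0 \<le> D \<bullet> v"
  shows "\<exists>\<alpha>\<ge>0. D = \<alpha> *\<^sub>R d"
proof -
  have dd: "0 < d \<bullet> d"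
    using assms(1) by simp
  define \<alpha> where "\<alpha> = (D \<bullet> d) / (d \<bullet> d)"
  define w where "w = D - \<alpha> *\<^sub>R d"
  have wd: "w \<bullet> d = 0"
    using dd by (simp add: w_def \<alpha>_def inner_diff_left)
  have "w = 0"
  proof (rule ccontr)
    assume "w \<noteq> 0"
    then have ww: "0 < w \<bullet> w"
      by simp
    define v where "v = d - ((D \<bullet> d + 1) / (w \<bullet> w)) *\<^sub>R w"
    have "D \<bullet> w = w \<bullet> w"
      using wd by (simp add: w_def inner_diff_left inner_diff_right inner_commute)
    then have "D \<bullet> v = -1"
      using ww by (simp add: v_def inner_diff_right)
    moreover have "d \<bullet> v = d \<bullet> d"
      using wd by (simp add: v_def inner_diff_right inner_commute)
    ultimately show False
      using nonneg[of v] dd by simp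
  qed
  moreover have "0 \<le> \<alpha>"
    using nonneg[OF dd] dd by (simp add: \<alpha>_def)
  ultimately show ?thesis
    by (auto simp: w_def)
qed

lemma normalized_eq_iff_positive_multiple:
  fixes a b :: "'a::real_normed_vector"
  assumes "a \<noteq> 0" and "b \<noteq> 0"
  shows "(1 / norm a) *\<^sub>R a = (1 / norm b) *\<^sub>R b \<longleftrightarrow> (\<exists>\<alpha>>0. a = \<alpha> *\<^sub>R b)"
proof
  assume "(1 / norm a) *\<^sub>R a = (1 / norm b) *\<^sub>R b"
  then have "norm a *\<^sub>R ((1 / norm a) *\<^sub>R a) = norm a *\<^sub>R ((1 / norm b) *\<^sub>R b)"
    by simp
  then have "a = (norm a / norm b) *\<^sub>R b"
    using assms(1) by simp
  then show "\<exists>\<alpha>>0. a = \<alpha> *\<^sub>R b"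
    using assms by (intro exI[of _ "norm a / norm b"]) simp
next
  assume "\<exists>\<alpha>>0. a = \<alpha> *\<^sub>R b"
  then show "(1 / norm a) *\<^sub>R a = (1 / norm b) *\<^sub>R b"
    by auto
qed

lemma quasiconvex_on_gradient_le:
  fixes D u z :: "'a::real_inner"
  assumes "quasiconvex_on G f" and "(f has_derivative (\<lambda>h. D \<bullet> h)) (at u)"
    and "u \<in> G" and "z \<in> G" and "f z \<le> f u"
  shows "D \<bullet> (z - u) \<le> 0"
proof (rule DERIV_nonpos_if_eventually_le_right[OF has_derivative_along_line[OF assms(2)]])
  have "\<forall>\<^sub>F t in at_right 0. t \<in> {0<..<1::real}"
    by (rule eventually_at_right_real) simp
  then show "\<forall>\<^sub>F t in at_right 0. f (u + t *\<^sub>R (z - u)) \<le> f (u + 0 *\<^sub>R (z - u))"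
  proof eventually_elim
    case (elim t)
    then have "f (u + t *\<^sub>R (z - u)) \<le> max (f u) (f z)"
      using assms(1,3,4) unfolding quasiconvex_on_def by simp
    with assms(5) show ?case
      by simp
  qed
qed

lemma quasiconvex_on_gradient_less:
  fixes D u z :: "'a::real_inner"
  assumes "open G" and "quasiconvex_on G f" and "continuous_on G f"
    and "(f has_derivative (\<lambda>h. D \<bullet> h)) (at u)" and "u \<in> G" and "z \<in> G"
    and "D \<noteq> 0" and "f z < f u"
  shows "D \<bullet> (z - u) < 0"
proof -
  have "\<forall>\<^sub>F t in at_right 0. f (z + t *\<^sub>R D) < f u"
    using order_tendstoD(2)[OF continuous_on_tendsto_along_ray[OF assms(1,6,3)] assms(8)] .
  moreover have "\<forall>\<^sub>F t in at_right 0. z + t *\<^sub>R D \<in> G"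
    using eventually_ray_in_open[OF assms(1,6)] .
  moreover have "\<forall>\<^sub>F t in at_right (0::real). 0 < t"
    by (simp add: eventually_at_right_less)
  ultimately have "\<forall>\<^sub>F t in at_right 0. D \<bullet> (z - u) + t * (D \<bullet> D) \<le> 0 \<and> 0 < t"
  proof eventually_elim
    case (elim t)
    then have "D \<bullet> (z + t *\<^sub>R D - u) \<le> 0"
      using quasiconvex_on_gradient_le[OF assms(2,4,5)] by simp
    with elim show ?case
      by (simp add: algebra_simps inner_diff_right inner_add_right)
  qed
  then obtain t where "D \<bullet> (z - u) + t * (D \<bullet> D) \<le> 0" and "0 < t"
    using eventually_happens by fastforce
  moreover have "0 < D \<bullet> D"
    using assms(7) by simp
  ultimately show ?thesis
    by (smt (verit) mult_pos_pos)
qed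

lemma quasiconvex_on_ge_on_gradient_halfspace:
  fixes D u z :: "'a::real_inner"
  assumes "open G" and "quasiconvex_on G f" and "continuous_on G f"
    and "(f has_derivative (\<lambda>h. D \<bullet> h)) (at u)" and "u \<in> G" and "z \<in> G"
    and "D \<noteq> 0" and "0 \<le> D \<bullet> (z - u)"
  shows "f u \<le> f z"
  using quasiconvex_on_gradient_less[OF assms(1-7)] assms(8) by force

lemma quasiconvex_on_perturbed_segment:
  fixes x y v w Dx Dy Db :: "'a::real_inner" and \<tau> :: real
  defines "b \<equiv> y + \<tau> *\<^sub>R (x - y)"
  assumes "open G" and "quasiconvex_on G f" and "x \<in> G" and "y \<in> G" and "0 \<le> \<tau>" and "\<tau> \<le> 1"
    and "(f has_derivative (\<lambda>h. Dx \<bullet> h)) (at x)" and "(f has_derivative (\<lambda>h. Dy \<bullet> h)) (at y)"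
    and "(f has_derivative (\<lambda>h. Db \<bullet> h)) (at b)"
    and "f x \<le> f b" and "f y \<le> f b"
  shows "Db \<bullet> ((1 - \<tau>) *\<^sub>R v + \<tau> *\<^sub>R w) \<le> max (Dx \<bullet> w) (Dy \<bullet> v)"
proof (rule ccontr)
  define p where "p = (1 - \<tau>) *\<^sub>R v + \<tau> *\<^sub>R w"
  assume "\<not> Db \<bullet> ((1 - \<tau>) *\<^sub>R v + \<tau> *\<^sub>R w) \<le> max (Dx \<bullet> w) (Dy \<bullet> v)"
  then have "0 < Db \<bullet> p - Dx \<bullet> w" and "0 < Db \<bullet> p - Dy \<bullet> v"
    by (auto simp: p_def)
  then have "\<forall>\<^sub>F t in at_right 0. f b - f x < f (b + t *\<^sub>R p) - f (x + t *\<^sub>R w)"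
    and "\<forall>\<^sub>F t in at_right 0. f b - f y < f (b + t *\<^sub>R p) - f (y + t *\<^sub>R v)"
    using DERIV_pos_imp_eventually_gt_right[OF DERIV_diff[OF has_derivative_along_line
        has_derivative_along_line]] assms(10,8,9) by fastforce+
  moreover have "\<forall>\<^sub>F t in at_right 0. x + t *\<^sub>R w \<in> G" and "\<forall>\<^sub>F t in at_right 0. y + t *\<^sub>R v \<in> G"
    using eventually_ray_in_open assms(2,4,5) by blast+
  ultimately have "\<forall>\<^sub>F t in at_right (0::real). False"
  proof eventually_elim
    case (elim t)
    have "(y + t *\<^sub>R v) + \<tau> *\<^sub>R ((x + t *\<^sub>R w) - (y + t *\<^sub>R v)) = b + t *\<^sub>R p"
      by (simp add: b_def p_def algebra_simps)
    then have "f (b + t *\<^sub>R p) \<le> max (f (y + t *\<^sub>R v)) (f (x + t *\<^sub>R w))"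
      using assms(3,6,7) elim(3,4) unfolding quasiconvex_on_def by metis
    with elim(1,2) assms(11,12) show False
      by linarith
  qed
  then show False
    by simp
qed

lemma quasiconvex_on_gradient_nonzero_on_level_hyperplane:
  fixes f :: "'a::real_inner \<Rightarrow> real"
  assumes "open G" and "convex G" and "quasiconvex_on G f"
    and der: "\<forall>x\<in>G. (f has_derivative (\<lambda>h. df x \<bullet> h)) (at x)" and "continuous_on G df"
    and "xb \<in> G" and "df xb \<noteq> 0" and "x \<in> G" and "f x = f xb" and "df xb \<bullet> (x - xb) = 0"
  shows "df x \<noteq> 0"
proof
  assume "df x = 0"
  define d where "d = df xb"
  have "((\<lambda>t. df (xb + t *\<^sub>R (x - xb)) \<bullet> d) \<longlongrightarrow> d \<bullet> d) (at_right 0)"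
    unfolding d_def by (intro tendsto_inner continuous_on_tendsto_along_ray[OF assms(1,6,5)] tendsto_const)
  then have "\<forall>\<^sub>F t in at_right 0. 0 < df (xb + t *\<^sub>R (x - xb)) \<bullet> d"
    using assms(7) by (simp add: order_tendstoD(1) d_def)
  moreover have "\<forall>\<^sub>F t in at_right 0. t \<in> {0<..<1::real}"
    by (rule eventually_at_right_real) simp
  ultimately have "\<forall>\<^sub>F t in at_right 0. 0 < df (xb + t *\<^sub>R (x - xb)) \<bullet> d \<and> t \<in> {0<..<1}"
    by (rule eventually_conj)
  then obtain \<tau> where pos: "0 < df (xb + \<tau> *\<^sub>R (x - xb)) \<bullet> d" and \<tau>: "0 < \<tau>" "\<tau> < 1"
    using eventually_happens by fastforce
  define b where "b = xb + \<tau> *\<^sub>R (x - xb)"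
  have "b = (1 - \<tau>) *\<^sub>R xb + \<tau> *\<^sub>R x"
    by (simp add: b_def algebra_simps)
  then have "b \<in> G"
    using convexD[OF assms(2,6,8)] \<tau> by simp
  have "f b \<le> f xb"
    using assms(3,6,8,9) \<tau> unfolding quasiconvex_on_def b_def by (metis less_eq_real_def max.idem)
  moreover have "f xb \<le> f b"
    using quasiconvex_on_ge_on_gradient_halfspace[OF assms(1,3) continuous_on_if_has_derivative_at[OF der]
        bspec[OF der assms(6)] assms(6) \<open>b \<in> G\<close> assms(7)] assms(10) by (simp add: b_def)
  ultimately have "f b = f xb"
    by simp
  have "df b \<bullet> ((1 - \<tau>) *\<^sub>R 0 + \<tau> *\<^sub>R d) \<le> max (df x \<bullet> d) (df xb \<bullet> 0)"
    by (rule quasiconvex_on_perturbed_segment[OF assms(1,3,8,6)])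
      (use der assms(6,8,9) \<open>b \<in> G\<close> \<open>f b = f xb\<close> \<tau> in \<open>auto simp: b_def\<close>)
  then show False
    using \<open>df x = 0\<close> pos \<tau> by (simp add: b_def mult_le_0_iff)
qed

lemma quasiconvex_on_gradient_positive_multiple_on_level_hyperplane:
  fixes f :: "'a::real_inner \<Rightarrow> real"
  assumes "open G" and "convex G" and "quasiconvex_on G f"
    and der: "\<forall>x\<in>G. (f has_derivative (\<lambda>h. df x \<bullet> h)) (at x)" and "continuous_on G df"
    and "xb \<in> G" and "df xb \<noteq> 0" and "x \<in> G" and "f x = f xb" and "df xb \<bullet> (x - xb) = 0"
  shows "\<exists>\<alpha>>0. df x = \<alpha> *\<^sub>R df xb"
proof -
  have "0 \<le> df x \<bullet> v" if "0 < df xb \<bullet> v" for v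
  proof -
    have deriv: "((\<lambda>t. - f (x + t *\<^sub>R v)) has_real_derivative - (df x \<bullet> v)) (at 0)"
      using der assms(8) by (intro DERIV_minus has_derivative_along_line) simp
    have "\<forall>\<^sub>F t in at_right (0::real). 0 < t"
      by (simp add: eventually_at_right_less)
    with eventually_ray_in_open[OF assms(1,8), of v]
    have le: "\<forall>\<^sub>F t in at_right 0. - f (x + t *\<^sub>R v) \<le> - f (x + 0 *\<^sub>R v)"
    proof eventually_elim
      case (elim t)
      have "df xb \<bullet> (x + t *\<^sub>R v - xb) = t * (df xb \<bullet> v)"
        using assms(10) by (simp add: inner_diff_right inner_add_right)
      with elim that have "f xb \<le> f (x + t *\<^sub>R v)"
        by (intro quasiconvex_on_ge_on_gradient_halfspace[OF assms(1,3)
              continuous_on_if_has_derivative_at[OF der] _ assms(6)]) (use der assms(6) in auto)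
      with assms(9) show ?case
        by simp
    qed
    from DERIV_nonpos_if_eventually_le_right[OF deriv le] show ?thesis
      by simp
  qed
  then obtain \<alpha> where "0 \<le> \<alpha>" and "df x = \<alpha> *\<^sub>R df xb"
    using nonneg_multiple_if_inner_nonneg_on_halfspace[OF assms(7)] by blast
  moreover have "df x \<noteq> 0"
    using quasiconvex_on_gradient_nonzero_on_level_hyperplane[OF assms] .
  ultimately show ?thesis
    by (metis less_eq_real_def scale_zero_left)
qed

lemma KKT_mult_complementarity:
  assumes "KKT_mult X df g dg m xb lam" and "x \<in> X" and "df xb \<bullet> (x - xb) \<le> 0"
    and "\<forall>i\<in>active g m xb. dg i xb \<bullet> (x - xb) \<le> 0"
  shows "df xb \<bullet> (x - xb) = 0" and "\<forall>i\<in>active g m xb. lam i * (dg i xb \<bullet> (x - xb)) = 0"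
proof -
  let ?A = "active g m xb"
  let ?t = "\<lambda>i. lam i * (dg i xb \<bullet> (x - xb))"
  have "finite ?A" and "?A \<subseteq> {1..m}"
    by (auto simp: active_def)
  have terms: "\<forall>i\<in>?A. ?t i \<le> 0"
    using assms(1,4) \<open>?A \<subseteq> {1..m}\<close> by (auto simp: KKT_mult_def mult_nonneg_nonpos)
  have "0 \<le> (df xb + (\<Sum>i\<in>?A. lam i *\<^sub>R dg i xb)) \<bullet> (x - xb)"
    using assms(1,2) by (simp add: KKT_mult_def)
  then have kkt: "0 \<le> df xb \<bullet> (x - xb) + (\<Sum>i\<in>?A. ?t i)"
    by (simp add: inner_add_left inner_sum_left)
  moreover have "(\<Sum>i\<in>?A. ?t i) \<le> 0"
    using terms by (simp add: sum_nonpos)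
  ultimately show "df xb \<bullet> (x - xb) = 0"
    using assms(3) by simp
  have "(\<Sum>i\<in>?A. - ?t i) = 0"
    using kkt assms(3) \<open>(\<Sum>i\<in>?A. ?t i) \<le> 0\<close> by (simp add: sum_negf)
  with terms sum_nonneg_eq_0_iff[OF \<open>finite ?A\<close>, of "\<lambda>i. - ?t i"]
  show "\<forall>i\<in>?A. ?t i = 0"
    by simp
qed

lemma GMFCQ_imp_active_gradient_nonzero:
  assumes "GMFCQ X g dg m xb" and "i \<in> active g m xb"
  shows "dg i xb \<noteq> 0"
  using assms unfolding GMFCQ_def by fastforce

lemma solset_subset_S1':
  fixes \<Gamma> X :: "'a::real_inner set"
  assumes "open \<Gamma>" and "convex \<Gamma>" and "X \<subseteq> \<Gamma>" and xb: "xb \<in> solset f (feasible X g m)"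
    and derf: "\<forall>x\<in>\<Gamma>. (f has_derivative (\<lambda>h. df x \<bullet> h)) (at x)" and "continuous_on \<Gamma> df"
    and qcf: "quasiconvex_on \<Gamma> f"
    and derg: "\<forall>i\<in>active g m xb. \<forall>x\<in>\<Gamma>. (g i has_derivative (\<lambda>h. dg i x \<bullet> h)) (at x)"
    and qcg: "\<forall>i\<in>active g m xb. quasiconvex_on \<Gamma> (g i)"
    and "df xb \<noteq> 0" and dg_nz: "\<forall>i\<in>active g m xb. dg i xb \<noteq> 0"
    and kkt: "KKT_mult X df g dg m xb lam"
  shows "solset f (feasible X g m) \<subseteq> S1' X df g m xb lam"
proof
  fix x
  assume "x \<in> solset f (feasible X g m)"
  with xb have "x \<in> X" and gx: "\<forall>i\<in>{1..m}. g i x \<le> 0" and "f x = f xb"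
    by (auto simp: solset_def feasible_def intro: order_antisym)
  have "xb \<in> \<Gamma>" and "x \<in> \<Gamma>"
    using xb \<open>x \<in> X\<close> assms(3) by (auto simp: solset_def feasible_def)
  have "df xb \<bullet> (x - xb) \<le> 0"
    using quasiconvex_on_gradient_le[OF qcf _ \<open>xb \<in> \<Gamma>\<close> \<open>x \<in> \<Gamma>\<close>] derf \<open>xb \<in> \<Gamma>\<close> \<open>f x = f xb\<close>
    by simp
  moreover have "\<forall>i\<in>active g m xb. dg i xb \<bullet> (x - xb) \<le> 0"
    using quasiconvex_on_gradient_le[OF _ _ \<open>xb \<in> \<Gamma>\<close> \<open>x \<in> \<Gamma>\<close>] qcg derg gx \<open>xb \<in> \<Gamma>\<close>
    by (fastforce simp: active_def)
  ultimately have dx0: "df xb \<bullet> (x - xb) = 0"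
    and compl: "\<forall>i\<in>active g m xb. lam i * (dg i xb \<bullet> (x - xb)) = 0"
    using KKT_mult_complementarity[OF kkt \<open>x \<in> X\<close>] by blast+
  have "g i x = 0" if "i \<in> Itilde g m xb lam" for i
  proof -
    have i: "i \<in> active g m xb" and "i \<in> {1..m}" and "g i xb = 0" and "0 < lam i"
      using that by (auto simp: Itilde_def active_def)
    then have "dg i xb \<bullet> (x - xb) = 0"
      using compl by fastforce
    then have "g i xb \<le> g i x"
      using quasiconvex_on_ge_on_gradient_halfspace[OF assms(1) qcg[rule_format, OF i]
          continuous_on_if_has_derivative_at[OF bspec[OF derg i]]
          bspec[OF bspec[OF derg i] \<open>xb \<in> \<Gamma>\<close>] \<open>xb \<in> \<Gamma>\<close> \<open>x \<in> \<Gamma>\<close>]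
        i dg_nz by simp
    with gx \<open>i \<in> {1..m}\<close> \<open>g i xb = 0\<close> show ?thesis
      by (simp add: order_antisym)
  qed
  then have "x \<in> X1 X g m xb lam"
    using \<open>x \<in> X\<close> gx by (auto simp: X1_def)
  moreover obtain \<alpha> where "0 < \<alpha>" and "df x = \<alpha> *\<^sub>R df xb"
    using quasiconvex_on_gradient_positive_multiple_on_level_hyperplane[OF assms(1,2) qcf derf
        assms(6) \<open>xb \<in> \<Gamma>\<close> assms(10) \<open>x \<in> \<Gamma>\<close> \<open>f x = f xb\<close> dx0] by blast
  ultimately show "x \<in> S1' X df g m xb lam"
    using dx0 assms(10) normalized_eq_iff_positive_multiple[of "df x" "df xb"]
    by (auto simp: S1'_def)
qed

lemma S2'_subset_solset:
  fixes \<Gamma> X :: "'a::real_inner set"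
  assumes "open \<Gamma>" and "X \<subseteq> \<Gamma>" and xb: "xb \<in> solset f (feasible X g m)"
    and derf: "\<forall>x\<in>\<Gamma>. (f has_derivative (\<lambda>h. df x \<bullet> h)) (at x)"
    and qcf: "quasiconvex_on \<Gamma> f" and "df xb \<noteq> 0"
  shows "S2' X df g m xb lam \<subseteq> solset f (feasible X g m)"
proof
  fix x
  assume x: "x \<in> S2' X df g m xb lam"
  then have "x \<in> feasible X g m"
    by (auto simp: S2'_def X1_def feasible_def)
  have "xb \<in> \<Gamma>" and "x \<in> \<Gamma>"
    using xb \<open>x \<in> feasible X g m\<close> assms(2) by (auto simp: solset_def feasible_def)
  obtain \<alpha> where "0 < \<alpha>" and \<alpha>: "df x = \<alpha> *\<^sub>R df xb"
    using x assms(6) normalized_eq_iff_positive_multiple[of "df x" "df xb"] by (auto simp: S2'_def)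
  moreover have "df xb \<bullet> (x - xb) \<le> 0"
    using x by (simp add: S2'_def)
  ultimately have "0 \<le> df x \<bullet> (xb - x)"
    by (simp add: inner_diff_right mult_le_0_iff)
  moreover have "df x \<noteq> 0"
    using \<open>0 < \<alpha>\<close> \<alpha> assms(6) by simp
  ultimately have "f x \<le> f xb"
    using quasiconvex_on_ge_on_gradient_halfspace[OF assms(1) qcf
        continuous_on_if_has_derivative_at[OF derf] derf[rule_format, OF \<open>x \<in> \<Gamma>\<close>]
        \<open>x \<in> \<Gamma>\<close> \<open>xb \<in> \<Gamma>\<close>] by blast
  with xb \<open>x \<in> feasible X g m\<close> show "x \<in> solset f (feasible X g m)"
    by (auto simp: solset_def)
qed

theorem theorem4:
  fixes \<Gamma> X :: "'a::euclidean_space set"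
    and f :: "'a \<Rightarrow> real" and df :: "'a \<Rightarrow> 'a"
    and g :: "nat \<Rightarrow> 'a \<Rightarrow> real" and dg :: "nat \<Rightarrow> 'a \<Rightarrow> 'a"
    and m :: nat and xb :: 'a and lam :: "nat \<Rightarrow> real"
  assumes "open \<Gamma>" and "convex \<Gamma>" and "X \<subseteq> \<Gamma>" and "convex X"
    and "xb \<in> solset f (feasible X g m)"
    and "\<forall>x\<in>\<Gamma>. (f has_derivative (\<lambda>h. df x \<bullet> h)) (at x)" and "continuous_on \<Gamma> df"
    and "quasiconvex_on \<Gamma> f"
    and "\<forall>i\<in>active g m xb. \<forall>x\<in>\<Gamma>. (g i has_derivative (\<lambda>h. dg i x \<bullet> h)) (at x)"
    and "\<forall>i\<in>active g m xb. quasiconvex_on \<Gamma> (g i)"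
    and "\<forall>i\<in>{1..m} - active g m xb. isCont (g i) xb"
    and "df xb \<noteq> 0"
    and "GMFCQ X g dg m xb"
    and "KKT_mult X df g dg m xb lam"
  shows "solset f (feasible X g m) = S1' X df g m xb lam
       \<and> solset f (feasible X g m) = S2' X df g m xb lam"
proof -
  have "\<forall>i\<in>active g m xb. dg i xb \<noteq> 0"
    using GMFCQ_imp_active_gradient_nonzero[OF assms(13)] by blast
  then have "solset f (feasible X g m) \<subseteq> S1' X df g m xb lam"
    using solset_subset_S1'[OF assms(1-3,5-10,12) _ assms(14)] by blast
  moreover have "S1' X df g m xb lam \<subseteq> S2' X df g m xb lam"
    by (auto simp: S1'_def S2'_def)
  moreover have "S2' X df g m xb lam \<subseteq> solset f (feasible X g m)"
    using S2'_subset_solset[OF assms(1,3,5,6,8,12)] .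
  ultimately show ?thesis
    by blast
qed

end
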